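(* $\mathsf{Clique}\in\mathsf{dMAM}[O(1)]$, where, for a parameter $K$ known to all nodes, $\mathsf{Clique}$ is the language of $n$-node communication graphs $G$ that contain a clique of size $K$.
   Context: Distributed interactive proofs (model). An instance consists of a connected communication graph $G=(V,E)$ with $|V|=n$, where each node has a unique identifier of $O(\log n)$ bits, knows $n$, knows its own identifier, its local input (if the problem has local inputs), and the identifiers of its neighbours (with an arbitrary port numbering of its incident edges). A prover, who sees the whole instance, interacts with all nodes in $r$ alternating messages. In a verifier (node) message each node independently samples fresh uniformly random bits and sends them to the prover (public coins). In a prover message the prover sends each node a string. Nodes may additionally exchange the strings they received from the prover with their neighbours in $G$. At the end each node deterministically accepts or rejects as a function of its local information, its own random bits, the strings it received from the prover and those its neighbours received; the instance is accepted iff all nodes accept. The proof size is the maximum number of bits in any single message between the prover and any node. A language $\mathcal L$ (set of instances) is in $\mathsf{dIP}[r,\ell]$ if there is an $r$-message protocol of proof size $\ell=\ell(n)$ such that (completeness) for every instance in $\mathcal L$ some prover makes all nodes accept with probability $>2/3$, and (soundness) for every instance not in $\mathcal L$ and every prover, all nodes accept with probability $<1/3$ (probabilities over the nodes' coins). $\mathsf{dAM}[\ell]$, $\mathsf{dMAM}[\ell]$, $\mathsf{dAMAM}[\ell]$, $\mathsf{dMAMAM}[\ell]$ denote the cases of 2, 3, 4, 5 messages, where the letters indicate who sends each message in order (A = nodes send random coins, M = prover). *)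

theory Defs
  imports Complex_Main "HOL-Library.FuncSet"
begin

text \<open>Instances: a communication graph with vertex set V (vertices are their own unique
  natural-number identifiers) and a symmetric irreflexive edge relation E on V; connected.\<close>

definition graph_inst :: "nat set \<Rightarrow> (nat \<Rightarrow> nat \<Rightarrow> bool) \<Rightarrow> bool" where
  "graph_inst V E \<longleftrightarrow> finite V \<and> V \<noteq> {}
     \<and> (\<forall>x y. E x y \<longrightarrow> x \<in> V \<and> y \<in> V)
     \<and> (\<forall>x y. E x y \<longrightarrow> E y x) \<and> (\<forall>x. \<not> E x x)
     \<and> (\<forall>x\<in>V. \<forall>y\<in>V. E\<^sup>*\<^sup>* x y)"

text \<open>A node decision function receives: n, its own identifier, the identifiers of its
  neighbours, its own random bits, the two prover strings it received, and the pair of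
  prover strings received by each neighbour (None for non-neighbours).\<close>

type_synonym decider =
  "nat \<Rightarrow> nat \<Rightarrow> nat set \<Rightarrow> bool list \<Rightarrow> bool list \<Rightarrow> bool list
     \<Rightarrow> (nat \<Rightarrow> (bool list \<times> bool list) option) \<Rightarrow> bool"

definition nbr_msgs ::
  "(nat \<Rightarrow> nat \<Rightarrow> bool) \<Rightarrow> nat \<Rightarrow> (nat \<Rightarrow> bool list) \<Rightarrow> (nat \<Rightarrow> bool list)
     \<Rightarrow> nat \<Rightarrow> (bool list \<times> bool list) option" where
  "nbr_msgs E v m1 m2 = (\<lambda>u. if E v u then Some (m1 u, m2 u) else None)"

definition all_accept ::
  "decider \<Rightarrow> nat set \<Rightarrow> (nat \<Rightarrow> nat \<Rightarrow> bool) \<Rightarrow> (nat \<Rightarrow> bool list)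
     \<Rightarrow> (nat \<Rightarrow> bool list) \<Rightarrow> (nat \<Rightarrow> bool list) \<Rightarrow> bool" where
  "all_accept D V E \<rho> m1 m2 \<longleftrightarrow>
     (\<forall>v\<in>V. D (card V) v {u. E v u} (\<rho> v) (m1 v) (m2 v) (nbr_msgs E v m1 m2))"

definition coins :: "nat set \<Rightarrow> nat \<Rightarrow> (nat \<Rightarrow> bool list) set" where
  "coins V r = (\<Pi>\<^sub>E v\<in>V. {xs. length xs = r})"

text \<open>Acceptance probability of a 3-message (M A M) interaction: first prover message m1,
  then each node sends r coins, then the prover answers with m2 (depending on all coins).\<close>

definition acc_prob ::
  "decider \<Rightarrow> nat \<Rightarrow> nat set \<Rightarrow> (nat \<Rightarrow> nat \<Rightarrow> bool) \<Rightarrow> (nat \<Rightarrow> bool list)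
     \<Rightarrow> ((nat \<Rightarrow> bool list) \<Rightarrow> nat \<Rightarrow> bool list) \<Rightarrow> real" where
  "acc_prob D r V E m1 m2 =
     real (card {\<rho> \<in> coins V r. all_accept D V E \<rho> m1 (m2 \<rho>)}) / real (card (coins V r))"

definition dMAM :: "(nat \<Rightarrow> nat) \<Rightarrow> (nat set \<times> (nat \<Rightarrow> nat \<Rightarrow> bool)) set \<Rightarrow> bool" where
  "dMAM l L \<longleftrightarrow> (\<exists>(r :: nat \<Rightarrow> nat) (D :: decider). (\<forall>n. r n \<le> l n) \<and>
     (\<forall>V E. graph_inst V E \<longrightarrow>
        ((V, E) \<in> L \<longrightarrow>
           (\<exists>m1 m2. (\<forall>v. length (m1 v) \<le> l (card V)) \<and> (\<forall>\<rho> v. length (m2 \<rho> v) \<le> l (card V))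
                 \<and> acc_prob D (r (card V)) V E m1 m2 > 2/3))
      \<and> ((V, E) \<notin> L \<longrightarrow>
           (\<forall>m1 m2. acc_prob D (r (card V)) V E m1 m2 < 1/3))))"

definition clique_lang :: "nat \<Rightarrow> (nat set \<times> (nat \<Rightarrow> nat \<Rightarrow> bool)) set" where
  "clique_lang K = {(V, E). \<exists>S \<subseteq> V. card S = K \<and> (\<forall>x\<in>S. \<forall>y\<in>S. x \<noteq> y \<longrightarrow> E x y)}"

end

theory Submission
  imports Defs
begin

(* The prover marks a candidate clique S and tells every other node its distance to S modulo 3,
   which lets each unmarked node pick a parent one step closer to S. Every node draws two coins.
   A marked node checks that it has exactly K - 1 marked neighbours and must announce the parity
   of the coins on its closed marked neighbourhood, the same value as its marked neighbours;
   an unmarked node must announce the parity of the coins on its path to S, consistently with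
   its parent. If there is no K-clique,
   then either two adjacent marked nodes have different closed marked neighbourhoods, or nothing
   is marked and the parent pointers close a cycle. In both cases the parity constraints make
   the coins of one node w a function of the coins of the other nodes, so at most a quarter of
   all coin outcomes can be accepted. *)

definition parity :: "('a \<Rightarrow> bool) \<Rightarrow> 'a set \<Rightarrow> bool" where
  "parity f A \<longleftrightarrow> odd (card {x\<in>A. f x})"

lemma parity_insert:
  assumes "finite A" "x \<notin> A"
  shows "parity f (insert x A) = (f x \<noteq> parity f A)"
proof -
  have "{y\<in>insert x A. f y} = (if f x then insert x {y\<in>A. f y} else {y\<in>A. f y})"
    by auto
  then show ?thesis
    using assms by (simp add: parity_def)
qed

lemma parity_remove:
  assumes "finite A" "w \<in> A"
  shows "parity f A = (f w \<noteq> parity f (A - {w}))"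
  using parity_insert[of "A - {w}" w f] assms by (simp add: insert_absorb)

lemma parity_cong: "(\<And>x. x \<in> A \<Longrightarrow> f x = g x) \<Longrightarrow> parity f A = parity g A"
  unfolding parity_def by (metis (mono_tags, lifting) Collect_cong)

lemma parity_determines_point:
  assumes "finite A" "w \<in> A" "w \<notin> B"
    and "parity f A = parity f B" "parity g A = parity g B"
    and agree: "\<And>x. x \<noteq> w \<Longrightarrow> f x = g x"
  shows "f w = g w"
proof -
  have "parity f B = parity g B"
    by (rule parity_cong) (metis assms(3) agree)
  moreover have "parity f (A - {w}) = parity g (A - {w})"
    by (rule parity_cong) (use agree in auto)
  ultimately show ?thesis
    using parity_remove[OF assms(1,2), of f] parity_remove[OF assms(1,2), of g] assms(4,5) by auto
qed

primrec path_parity :: "('a \<Rightarrow> 'a) \<Rightarrow> ('a \<Rightarrow> bool) \<Rightarrow> nat \<Rightarrow> 'a \<Rightarrow> bool" where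
  "path_parity p y 0 x = False"
| "path_parity p y (Suc n) x = (y x \<noteq> path_parity p y n (p x))"

lemma path_parity_telescope:
  assumes step: "\<And>x. x \<in> V \<Longrightarrow> p x \<in> V \<and> \<phi> x = (\<phi> (p x) \<noteq> y x)" and "x \<in> V"
  shows "\<phi> x = (\<phi> ((p^^n) x) \<noteq> path_parity p y n x)"
  using \<open>x \<in> V\<close>
proof (induction n arbitrary: x)
  case 0
  then show ?case by simp
next
  case (Suc n)
  then show ?case
    using step[OF Suc.prems] Suc.IH[of "p x"] by (auto simp: funpow_swap1)
qed

lemma path_parity_cong:
  "(\<And>k. k < n \<Longrightarrow> y ((p^^k) x) = z ((p^^k) x)) \<Longrightarrow> path_parity p y n x = path_parity p z n x"
proof (induction n arbitrary: x)
  case 0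
  then show ?case by simp
next
  case (Suc n)
  have "y ((p^^k) (p x)) = z ((p^^k) (p x))" if "k < n" for k
    using Suc.prems[of "Suc k"] that by (simp add: funpow_swap1)
  then show ?case
    using Suc.IH[of "p x"] Suc.prems[of 0] by simp
qed

lemma funpow_minimal_cycle:
  assumes "finite V" "V \<noteq> {}" "p ` V \<subseteq> V"
  obtains w n where "w \<in> V" "0 < n" "(p^^n) w = w" "\<And>k. 0 < k \<Longrightarrow> k < n \<Longrightarrow> (p^^k) w \<noteq> w"
proof -
  obtain x where x: "x \<in> V"
    using assms(2) by blast
  have iterate_in: "(p^^k) y \<in> V" if "y \<in> V" for k y
    using that assms(3) by (induction k) auto
  have "\<not> inj_on (\<lambda>k. (p^^k) x) {..card V}"
  proof
    assume "inj_on (\<lambda>k. (p^^k) x) {..card V}"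
    then have "card {..card V} \<le> card V"
      using card_inj_on_le[OF _ _ assms(1)] iterate_in[OF x] by blast
    then show False by simp
  qed
  then obtain i j where ij: "i < j" "(p^^i) x = (p^^j) x"
    unfolding inj_on_def by (metis linorder_neqE_nat)
  define w where "w = (p^^i) x"
  have "(p^^(j - i)) w = (p^^j) x"
    using ij(1) by (simp add: w_def flip: funpow_add[THEN fun_cong, unfolded comp_def])
  then have period: "0 < j - i \<and> (p^^(j - i)) w = w"
    using ij by (simp add: w_def)
  define n where "n = (LEAST n. 0 < n \<and> (p^^n) w = w)"
  have "0 < n \<and> (p^^n) w = w"
    unfolding n_def by (rule LeastI[of "\<lambda>n. 0 < n \<and> (p^^n) w = w", OF period])
  moreover have "(p^^k) w \<noteq> w" if "0 < k" "k < n" for k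
    using not_less_Least[of k "\<lambda>n. 0 < n \<and> (p^^n) w = w"] that unfolding n_def by blast
  ultimately show ?thesis
    using that iterate_in[OF x] w_def by blast
qed

lemma finite_coins: "finite V \<Longrightarrow> finite (coins V r)"
  unfolding coins_def
  by (intro finite_PiE) (simp_all add: finite_lists_length_eq[of UNIV, simplified])

lemma coins_nonempty: "coins V r \<noteq> {}"
  unfolding coins_def by (simp add: PiE_eq_empty_iff) (metis length_replicate)

lemma card_coins_coordinate_determined:
  assumes "finite V" "w \<in> V" "A \<subseteq> coins V r"
    and determined: "\<And>\<rho> \<sigma>. \<rho> \<in> A \<Longrightarrow> \<sigma> \<in> A \<Longrightarrow> (\<And>x. x \<noteq> w \<Longrightarrow> \<rho> x = \<sigma> x) \<Longrightarrow> \<rho> w = \<sigma> w"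
  shows "card A * 2 ^ r \<le> card (coins V r)"
proof -
  let ?L = "{xs :: bool list. length xs = r}"
  let ?f = "\<lambda>(\<rho>, xs). \<rho>(w := xs)"
  have "inj_on ?f (A \<times> ?L)"
  proof (rule inj_onI, clarify)
    fix \<rho> xs \<sigma> ys
    assume "\<rho> \<in> A" "\<sigma> \<in> A" and eq: "\<rho>(w := xs) = \<sigma>(w := ys)"
    have off_w: "\<rho> x = \<sigma> x" if "x \<noteq> w" for x
      using fun_cong[OF eq, of x] that by simp
    have "\<rho> w = \<sigma> w"
      using determined[OF \<open>\<rho> \<in> A\<close> \<open>\<sigma> \<in> A\<close> off_w] .
    with off_w have "\<rho> = \<sigma>"
      by (metis ext)
    then show "\<rho> = \<sigma> \<and> xs = ys"
      using fun_cong[OF eq, of w] by simp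
  qed
  moreover have "?f ` (A \<times> ?L) \<subseteq> coins V r"
  proof (rule image_subsetI)
    fix x
    assume "x \<in> A \<times> ?L"
    then obtain \<rho> xs where x: "x = (\<rho>, xs)" "\<rho> \<in> A" "length xs = r"
      by blast
    then have "\<rho>(w := xs) \<in> (\<Pi>\<^sub>E v\<in>insert w V. ?L)"
      using assms(3) by (intro PiE_fun_upd) (auto simp: coins_def)
    then show "?f x \<in> coins V r"
      using x(1) assms(2) by (simp add: coins_def insert_absorb)
  qed
  ultimately have "card (A \<times> ?L) \<le> card (coins V r)"
    by (rule card_inj_on_le[OF _ _ finite_coins[OF assms(1)]])
  moreover have "card ?L = 2 ^ r"
    using card_lists_length_eq[of "UNIV :: bool set" r] by simp
  ultimately show ?thesis
    by (simp add: card_cartesian_product)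
qed

lemma acc_prob_eq_1:
  assumes "finite V" "\<And>\<rho>. \<rho> \<in> coins V r \<Longrightarrow> all_accept D V E \<rho> m1 (m2 \<rho>)"
  shows "acc_prob D r V E m1 m2 = 1"
proof -
  have "{\<rho> \<in> coins V r. all_accept D V E \<rho> m1 (m2 \<rho>)} = coins V r"
    using assms(2) by blast
  then show ?thesis
    using finite_coins[OF assms(1)] coins_nonempty by (simp add: acc_prob_def)
qed

lemma acc_prob_le_coordinate_determined:
  assumes "finite V" "w \<in> V"
    and determined: "\<And>\<rho> \<sigma>. \<rho> \<in> coins V r \<Longrightarrow> \<sigma> \<in> coins V r
      \<Longrightarrow> all_accept D V E \<rho> m1 (m2 \<rho>) \<Longrightarrow> all_accept D V E \<sigma> m1 (m2 \<sigma>)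
      \<Longrightarrow> (\<And>x. x \<noteq> w \<Longrightarrow> \<rho> x = \<sigma> x) \<Longrightarrow> \<rho> w = \<sigma> w"
  shows "acc_prob D r V E m1 m2 \<le> 1 / 2 ^ r"
proof -
  let ?A = "{\<rho> \<in> coins V r. all_accept D V E \<rho> m1 (m2 \<rho>)}"
  have "card ?A * 2 ^ r \<le> card (coins V r)"
  proof (rule card_coins_coordinate_determined[OF assms(1,2)])
    fix \<rho> \<sigma>
    assume "\<rho> \<in> ?A" "\<sigma> \<in> ?A" "\<And>x. x \<noteq> w \<Longrightarrow> \<rho> x = \<sigma> x"
    then show "\<rho> w = \<sigma> w"
      using determined[of \<rho> \<sigma>] by blast
  qed blast
  then have "real (card ?A) * 2 ^ r \<le> real (card (coins V r))"
    using of_nat_mono by fastforce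
  moreover have "0 < card (coins V r)"
    using finite_coins[OF assms(1)] coins_nonempty by (simp add: card_gt_0_iff)
  ultimately show ?thesis
    unfolding acc_prob_def by (simp add: field_simps)
qed

lemma
  assumes "graph_inst V E"
  shows graph_inst_finite: "finite V"
    and graph_inst_nonempty: "V \<noteq> {}"
    and graph_inst_edgeD: "E x y \<Longrightarrow> x \<in> V \<and> y \<in> V"
    and graph_inst_sym: "E x y \<Longrightarrow> E y x"
    and graph_inst_irrefl: "\<not> E x x"
    and graph_inst_connected: "x \<in> V \<Longrightarrow> y \<in> V \<Longrightarrow> E\<^sup>*\<^sup>* x y"
  using assms unfolding graph_inst_def by blast+

lemma graph_inst_finite_nbrs: "graph_inst V E \<Longrightarrow> finite {u. E v u}"
  by (rule finite_subset[OF _ graph_inst_finite]) (auto dest: graph_inst_edgeD)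

definition dist_to :: "(nat \<Rightarrow> nat \<Rightarrow> bool) \<Rightarrow> nat set \<Rightarrow> nat \<Rightarrow> nat" where
  "dist_to E S v = (LEAST d. \<exists>s\<in>S. (E^^d) v s)"

lemma dist_to_le: "s \<in> S \<Longrightarrow> (E^^d) v s \<Longrightarrow> dist_to E S v \<le> d"
  unfolding dist_to_def by (rule Least_le) (rule bexI)

context
  fixes V E S
  assumes graph: "graph_inst V E" and "S \<subseteq> V" "S \<noteq> {}"
begin

lemma dist_to_witness:
  assumes "v \<in> V"
  obtains s where "s \<in> S" "(E^^dist_to E S v) v s"
proof -
  obtain s where s: "s \<in> S"
    using \<open>S \<noteq> {}\<close> by blast
  with \<open>S \<subseteq> V\<close> have "E\<^sup>*\<^sup>* v s"
    using graph_inst_connected[OF graph assms] by blast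
  then obtain d where "(E^^d) v s"
    using rtranclp_imp_relpowp by metis
  with s have "\<exists>d. \<exists>s\<in>S. (E^^d) v s"
    by blast
  then have "\<exists>s\<in>S. (E^^dist_to E S v) v s"
    unfolding dist_to_def by (rule LeastI_ex)
  then show ?thesis
    using that by blast
qed

lemma dist_to_edge: "E u x \<Longrightarrow> dist_to E S u \<le> Suc (dist_to E S x)"
proof -
  assume edge: "E u x"
  then obtain s where s: "s \<in> S" "(E^^dist_to E S x) x s"
    using dist_to_witness graph_inst_edgeD[OF graph] by blast
  have "(E^^Suc (dist_to E S x)) u s"
    by (rule relpowp_Suc_I2[where P=E, OF edge s(2)])
  with s(1) show ?thesis
    by (rule dist_to_le)
qed

lemma dist_to_eq_0_iff:
  assumes "v \<in> V"
  shows "dist_to E S v = 0 \<longleftrightarrow> v \<in> S"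
proof
  assume "dist_to E S v = 0"
  moreover obtain s where "s \<in> S" "(E^^dist_to E S v) v s"
    by (rule dist_to_witness[OF assms])
  ultimately show "v \<in> S"
    by simp
next
  assume "v \<in> S"
  then show "dist_to E S v = 0"
    using dist_to_le[of v S 0 E v] by simp
qed

lemma dist_to_Suc_step:
  assumes "v \<in> V" "dist_to E S v = Suc d"
  obtains x where "E v x" "dist_to E S x = d"
proof -
  obtain s where s: "s \<in> S" "(E^^dist_to E S v) v s"
    by (rule dist_to_witness[OF assms(1)])
  then obtain x where x: "E v x" "(E^^d) x s"
    using assms(2) relpowp_Suc_D2[of d E v s] by auto
  have "dist_to E S x \<le> d"
    using dist_to_le[OF s(1) x(2)] .
  then have "dist_to E S x = d"
    using dist_to_edge[OF x(1)] assms(2) by simp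
  with x(1) show ?thesis
    by (rule that)
qed

end

(* First prover message of a node: bit 0 marks it as a member of the claimed
   clique, bits 1-2 encode its claimed distance to the clique modulo 3. Second message: bits 0-1
   echo the node's two coins, bits 2-3 are the coin parities along its parent path to the
   clique, bits 4-5 the coin parities over its closed marked neighbourhood. In clique_node_ok,
   nb1 and nb2 give the two messages of the neighbours; for K = 0 every graph is a yes-instance,
   so every node accepts. *)

definition dist_label :: "bool list \<Rightarrow> nat" where
  "dist_label m = of_bool (m ! 1) + of_bool (m ! 2)"

definition parents :: "nat set \<Rightarrow> (nat \<Rightarrow> bool list) \<Rightarrow> bool list \<Rightarrow> nat set" where
  "parents N nb1 own1 = {u\<in>N. dist_label (nb1 u) = (dist_label own1 + 2) mod 3}"

definition clique_node_ok :: "nat \<Rightarrow> nat set \<Rightarrow> bool list \<Rightarrow> (nat \<Rightarrow> bool list) \<Rightarrow> (nat \<Rightarrow> bool list)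
    \<Rightarrow> bool list \<Rightarrow> bool list \<Rightarrow> bool" where
  "clique_node_ok K N rv nb1 nb2 own1 own2 \<longleftrightarrow> 0 < K \<longrightarrow>
     (\<forall>j<2. own2 ! j = rv ! j) \<and>
     (if own1 ! 0 then
        card {u\<in>N. nb1 u ! 0} = K - 1 \<and>
        (\<forall>j<2. own2 ! (4+j) = (rv ! j \<noteq> parity (\<lambda>u. nb2 u ! j) {u\<in>N. nb1 u ! 0})) \<and>
        (\<forall>u\<in>N. nb1 u ! 0 \<longrightarrow> (\<forall>j<2. nb2 u ! (4+j) = own2 ! (4+j)))
      else
        parents N nb1 own1 \<noteq> {} \<and>
        (\<forall>j<2. own2 ! (2+j) = (nb2 (Min (parents N nb1 own1)) ! (2+j) \<noteq> rv ! j)))"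

definition clique_decider :: "nat \<Rightarrow> decider" where
  "clique_decider K n v N rv own1 own2 nb =
     clique_node_ok K N rv (\<lambda>u. fst (the (nb u))) (\<lambda>u. snd (the (nb u))) own1 own2"

lemma clique_node_ok_cong:
  assumes "finite N"
    and nb1: "\<And>u. u \<in> N \<Longrightarrow> nb1 u = nb1' u" and nb2: "\<And>u. u \<in> N \<Longrightarrow> nb2 u = nb2' u"
  shows "clique_node_ok K N rv nb1 nb2 own1 own2 = clique_node_ok K N rv nb1' nb2' own1 own2"
proof -
  have parents_eq: "parents N nb1 own1 = parents N nb1' own1"
    using nb1 by (auto simp: parents_def)
  have "finite (parents N nb1 own1)"
    using assms(1) by (simp add: parents_def)
  then have parent_msg: "nb2 (Min (parents N nb1 own1)) = nb2' (Min (parents N nb1 own1))"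
    if "parents N nb1 own1 \<noteq> {}"
    using Min_in[OF _ that] nb2 by (auto simp: parents_def)
  have marked_eq: "{u\<in>N. nb1 u ! 0} = {u\<in>N. nb1' u ! 0}"
    using nb1 by auto
  have "parity (\<lambda>u. nb2 u ! j) {u\<in>N. nb1 u ! 0} = parity (\<lambda>u. nb2' u ! j) {u\<in>N. nb1 u ! 0}" for j
    using nb2 by (intro parity_cong) auto
  then show ?thesis
    unfolding clique_node_ok_def parents_eq[symmetric] marked_eq[symmetric]
    using nb1 nb2 by (cases "parents N nb1 own1 = {}") (auto simp: parent_msg)
qed

lemma all_accept_clique_decider:
  assumes "graph_inst V E"
  shows "all_accept (clique_decider K) V E \<rho> m1 m2 \<longleftrightarrow>
    (\<forall>v\<in>V. clique_node_ok K {u. E v u} (\<rho> v) m1 m2 (m1 v) (m2 v))"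
  unfolding all_accept_def clique_decider_def
  by (intro ball_cong refl clique_node_ok_cong graph_inst_finite_nbrs[OF assms])
    (simp_all add: nbr_msgs_def)

lemma
  assumes "graph_inst V E" "all_accept (clique_decider K) V E \<rho> m1 m2" "v \<in> V" "0 < K"
  shows accepted_echo: "j < 2 \<Longrightarrow> m2 v ! j = \<rho> v ! j"
    and accepted_marked_degree: "m1 v ! 0 \<Longrightarrow> card {u. E v u \<and> m1 u ! 0} = K - 1"
    and accepted_marked_parity: "m1 v ! 0 \<Longrightarrow> j < 2 \<Longrightarrow>
      m2 v ! (4+j) = (\<rho> v ! j \<noteq> parity (\<lambda>u. m2 u ! j) {u. E v u \<and> m1 u ! 0})"
    and accepted_marked_agree: "m1 v ! 0 \<Longrightarrow> E v u \<Longrightarrow> m1 u ! 0 \<Longrightarrow> j < 2 \<Longrightarrow>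
      m2 u ! (4+j) = m2 v ! (4+j)"
    and accepted_unmarked_parent: "\<not> m1 v ! 0 \<Longrightarrow> parents {u. E v u} m1 (m1 v) \<noteq> {}"
    and accepted_unmarked_tree: "\<not> m1 v ! 0 \<Longrightarrow> j < 2 \<Longrightarrow>
      m2 v ! (2+j) = (m2 (Min (parents {u. E v u} m1 (m1 v))) ! (2+j) \<noteq> \<rho> v ! j)"
  using assms(2-4) unfolding all_accept_clique_decider[OF assms(1)] clique_node_ok_def
  by (auto split: if_splits)

definition honest_msg1 :: "(nat \<Rightarrow> nat \<Rightarrow> bool) \<Rightarrow> nat set \<Rightarrow> nat \<Rightarrow> bool list" where
  "honest_msg1 E S v = [v \<in> S, 1 \<le> dist_to E S v mod 3, 2 \<le> dist_to E S v mod 3]"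

definition honest_parent :: "(nat \<Rightarrow> nat \<Rightarrow> bool) \<Rightarrow> nat set \<Rightarrow> nat \<Rightarrow> nat" where
  "honest_parent E S v = Min (parents {u. E v u} (honest_msg1 E S) (honest_msg1 E S v))"

definition honest_msg2 ::
  "(nat \<Rightarrow> nat \<Rightarrow> bool) \<Rightarrow> nat set \<Rightarrow> (nat \<Rightarrow> bool list) \<Rightarrow> nat \<Rightarrow> bool list" where
  "honest_msg2 E S \<rho> v =
     map (\<lambda>j. \<rho> v ! j) [0, 1] @
     map (\<lambda>j. path_parity (honest_parent E S) (\<lambda>x. \<rho> x ! j) (dist_to E S v) v) [0, 1] @
     map (\<lambda>j. parity (\<lambda>x. \<rho> x ! j) S) [0, 1]"

lemma length_honest_msg1: "length (honest_msg1 E S v) = 3"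
  by (simp add: honest_msg1_def)

lemma length_honest_msg2: "length (honest_msg2 E S \<rho> v) = 6"
  by (simp add: honest_msg2_def)

lemma
  assumes "j < 2"
  shows honest_msg2_echo: "honest_msg2 E S \<rho> v ! j = \<rho> v ! j"
    and honest_msg2_tree: "honest_msg2 E S \<rho> v ! (2+j) =
      path_parity (honest_parent E S) (\<lambda>x. \<rho> x ! j) (dist_to E S v) v"
    and honest_msg2_clique: "honest_msg2 E S \<rho> v ! (4+j) = parity (\<lambda>x. \<rho> x ! j) S"
proof -
  have "j = 0 \<or> j = 1"
    using assms by auto
  then show "honest_msg2 E S \<rho> v ! j = \<rho> v ! j"
    and "honest_msg2 E S \<rho> v ! (2+j) =
      path_parity (honest_parent E S) (\<lambda>x. \<rho> x ! j) (dist_to E S v) v"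
    and "honest_msg2 E S \<rho> v ! (4+j) = parity (\<lambda>x. \<rho> x ! j) S"
    by (auto simp: honest_msg2_def)
qed

lemma dist_label_honest_msg1: "dist_label (honest_msg1 E S v) = dist_to E S v mod 3"
proof -
  have "dist_to E S v mod 3 \<in> {0, 1, 2}"
    by auto
  then show ?thesis
    by (auto simp: dist_label_def honest_msg1_def)
qed

lemma mod_eq_iff_eq_if_close:
  fixes x d n :: nat
  assumes "d \<le> x" "x < d + n"
  shows "x mod n = d mod n \<longleftrightarrow> x = d"
proof -
  have "x mod n = d mod n \<longleftrightarrow> n dvd x - d"
    using assms(1) by (rule mod_eq_dvd_iff_nat)
  also have "\<dots> \<longleftrightarrow> x = d"
    using assms by (auto dest: dvd_imp_le)
  finally show ?thesis .
qed

lemma parents_honest_msg1: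
  assumes "graph_inst V E" "S \<subseteq> V" "S \<noteq> {}" "v \<in> V" "dist_to E S v = Suc d"
  shows "parents {u. E v u} (honest_msg1 E S) (honest_msg1 E S v) = {u. E v u \<and> dist_to E S u = d}"
proof -
  have "dist_to E S u mod 3 = d mod 3 \<longleftrightarrow> dist_to E S u = d" if "E v u" for u
  proof (rule mod_eq_iff_eq_if_close)
    have "dist_to E S v \<le> Suc (dist_to E S u)" "dist_to E S u \<le> Suc (dist_to E S v)"
      using dist_to_edge[OF assms(1-3)] that graph_inst_sym[OF assms(1)] by blast+
    with assms(5) show "d \<le> dist_to E S u" "dist_to E S u < d + 3"
      by simp_all
  qed
  moreover have "(dist_to E S v mod 3 + 2) mod 3 = d mod 3"
    using assms(5) by (simp add: mod_simps)
  ultimately show ?thesis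
    by (auto simp: parents_def dist_label_honest_msg1)
qed

lemma honest_accepts:
  assumes graph: "graph_inst V E" and "S \<subseteq> V" "card S = K"
    and clique: "\<forall>x\<in>S. \<forall>y\<in>S. x \<noteq> y \<longrightarrow> E x y"
  shows "all_accept (clique_decider K) V E \<rho> (honest_msg1 E S) (honest_msg2 E S \<rho>)"
  unfolding all_accept_clique_decider[OF graph]
proof (intro ballI)
  fix v
  assume "v \<in> V"
  let ?m1 = "honest_msg1 E S" and ?m2 = "honest_msg2 E S \<rho>" and ?p = "honest_parent E S"
  have marked: "?m1 u ! 0 \<longleftrightarrow> u \<in> S" for u
    by (simp add: honest_msg1_def)
  have "finite S"
    using \<open>S \<subseteq> V\<close> graph_inst_finite[OF graph] by (rule finite_subset)
  show "clique_node_ok K {u. E v u} (\<rho> v) ?m1 ?m2 (?m1 v) (?m2 v)"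
  proof (cases "v \<in> S")
    case True
    have nbrs: "{u. E v u \<and> u \<in> S} = S - {v}"
      using clique True graph_inst_irrefl[OF graph] by auto
    have "parity (\<lambda>x. \<rho> x ! j) S = (\<rho> v ! j \<noteq> parity (\<lambda>u. ?m2 u ! j) (S - {v}))" if "j < 2" for j
    proof -
      have "parity (\<lambda>u. ?m2 u ! j) (S - {v}) = parity (\<lambda>x. \<rho> x ! j) (S - {v})"
        by (rule parity_cong) (simp add: honest_msg2_echo[OF that])
      then show ?thesis
        using parity_remove[OF \<open>finite S\<close> True, of "\<lambda>x. \<rho> x ! j"] by simp
    qed
    then show ?thesis
      using True \<open>finite S\<close> \<open>card S = K\<close>
      by (auto simp: clique_node_ok_def nbrs marked honest_msg2_echo honest_msg2_clique)
  next
    case False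
    show ?thesis
    proof (cases "0 < K")
      case False
      then show ?thesis
        by (simp add: clique_node_ok_def)
    next
      case True
      then have "S \<noteq> {}"
        using \<open>card S = K\<close> by auto
      note dist_lemmas = dist_to_eq_0_iff dist_to_Suc_step parents_honest_msg1
      note dist_lemmas = dist_lemmas[OF graph \<open>S \<subseteq> V\<close> \<open>S \<noteq> {}\<close> \<open>v \<in> V\<close>]
      obtain d where d: "dist_to E S v = Suc d"
        using dist_lemmas(1) False by (cases "dist_to E S v") auto
      let ?P = "parents {u. E v u} ?m1 (?m1 v)"
      have P: "?P = {u. E v u \<and> dist_to E S u = d}"
        using dist_lemmas(3)[OF d] .
      have "?P \<noteq> {}"
        unfolding P using dist_lemmas(2)[OF d] by blast
      moreover have "finite ?P"
        unfolding P using graph_inst_finite_nbrs[OF graph] by simp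
      ultimately have "Min ?P \<in> {u. E v u \<and> dist_to E S u = d}"
        unfolding P[symmetric] by (rule Min_in[rotated])
      then have "dist_to E S (?p v) = d"
        by (simp add: honest_parent_def)
      then have "?m2 v ! (2+j) = (?m2 (Min ?P) ! (2+j) \<noteq> \<rho> v ! j)" if "j < 2" for j
        unfolding honest_parent_def[symmetric] honest_msg2_tree[OF that] d by auto
      with \<open>?P \<noteq> {}\<close> \<open>v \<notin> S\<close> show ?thesis
        by (simp add: clique_node_ok_def marked honest_msg2_echo)
    qed
  qed
qed

lemma unmarked_coin_determined:
  assumes graph: "graph_inst V E" and "0 < K" and unmarked: "\<forall>v\<in>V. \<not> m1 v ! 0"
    and acc0: "all_accept (clique_decider K) V E \<rho>0 m1 (m2 \<rho>0)"
  obtains w where "w \<in> V"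
    and "\<And>\<rho> \<sigma> j. all_accept (clique_decider K) V E \<rho> m1 (m2 \<rho>)
      \<Longrightarrow> all_accept (clique_decider K) V E \<sigma> m1 (m2 \<sigma>)
      \<Longrightarrow> (\<And>x. x \<noteq> w \<Longrightarrow> \<rho> x = \<sigma> x) \<Longrightarrow> j < 2 \<Longrightarrow> \<rho> w ! j = \<sigma> w ! j"
proof -
  define p where "p x = Min (parents {u. E x u} m1 (m1 x))" for x
  have p_in: "p x \<in> V" if "x \<in> V" for x
  proof -
    have "parents {u. E x u} m1 (m1 x) \<noteq> {}"
      using accepted_unmarked_parent[OF graph acc0 that \<open>0 < K\<close>] unmarked that by blast
    moreover have "finite (parents {u. E x u} m1 (m1 x))"
      using graph_inst_finite_nbrs[OF graph] by (simp add: parents_def)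
    ultimately have "E x (p x)"
      unfolding p_def using Min_in by (fastforce simp: parents_def)
    then show ?thesis
      using graph_inst_edgeD[OF graph] by blast
  qed
  obtain w n where w: "w \<in> V" and "0 < n" and cycle: "(p^^n) w = w"
    and first_return: "\<And>k. 0 < k \<Longrightarrow> k < n \<Longrightarrow> (p^^k) w \<noteq> w"
    using funpow_minimal_cycle[OF graph_inst_finite[OF graph] graph_inst_nonempty[OF graph]] p_in
    by blast
  then obtain m where n: "n = Suc m"
    using gr0_implies_Suc by blast
  have coin: "\<rho> w ! j = path_parity p (\<lambda>x. \<rho> x ! j) m (p w)"
    if acc: "all_accept (clique_decider K) V E \<rho> m1 (m2 \<rho>)" and "j < 2" for \<rho> j
  proof -
    have "m2 \<rho> x ! (2+j) = (m2 \<rho> (p x) ! (2+j) \<noteq> \<rho> x ! j)" if "x \<in> V" for x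
      unfolding p_def
      using accepted_unmarked_tree[OF graph acc that \<open>0 < K\<close>] unmarked that \<open>j < 2\<close> by blast
    then have "m2 \<rho> w ! (2+j) = (m2 \<rho> ((p^^n) w) ! (2+j) \<noteq> path_parity p (\<lambda>x. \<rho> x ! j) n w)"
      using p_in w by (intro path_parity_telescope[where V=V]) auto
    then have "\<not> path_parity p (\<lambda>x. \<rho> x ! j) n w"
      unfolding cycle by blast
    then show ?thesis
      unfolding n by simp
  qed
  show ?thesis
  proof (rule that[OF w])
    fix \<rho> \<sigma> and j :: nat
    assume acc: "all_accept (clique_decider K) V E \<rho> m1 (m2 \<rho>)"
      "all_accept (clique_decider K) V E \<sigma> m1 (m2 \<sigma>)"
      and agree: "\<And>x. x \<noteq> w \<Longrightarrow> \<rho> x = \<sigma> x" and "j < 2"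
    have "(p^^k) (p w) \<noteq> w" if "k < m" for k
      using first_return[of "Suc k"] that n by (simp add: funpow_swap1)
    then have "path_parity p (\<lambda>x. \<rho> x ! j) m (p w) = path_parity p (\<lambda>x. \<sigma> x ! j) m (p w)"
      using agree by (intro path_parity_cong) auto
    then show "\<rho> w ! j = \<sigma> w ! j"
      using coin[OF acc(1) \<open>j < 2\<close>] coin[OF acc(2) \<open>j < 2\<close>] by simp
  qed
qed

definition closed_nbhd :: "('a \<Rightarrow> 'a \<Rightarrow> bool) \<Rightarrow> 'a set \<Rightarrow> 'a \<Rightarrow> 'a set" where
  "closed_nbhd E S x = insert x {u\<in>S. E x u}"

lemma closed_nbhd_clique:
  assumes "s \<in> S"
    and same: "\<And>a b. a \<in> S \<Longrightarrow> b \<in> S \<Longrightarrow> E a b \<Longrightarrow> closed_nbhd E S a = closed_nbhd E S b"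
  shows "\<forall>x\<in>closed_nbhd E S s. \<forall>y\<in>closed_nbhd E S s. x \<noteq> y \<longrightarrow> E x y"
proof (intro ballI impI)
  fix x y
  assume x: "x \<in> closed_nbhd E S s" and y: "y \<in> closed_nbhd E S s" and "x \<noteq> y"
  have "closed_nbhd E S x = closed_nbhd E S s"
    using x same[OF \<open>s \<in> S\<close>, of x] by (auto simp: closed_nbhd_def)
  with y \<open>x \<noteq> y\<close> show "E x y"
    by (auto simp: closed_nbhd_def)
qed

lemma edge_with_distinct_closed_nbhds:
  assumes graph: "graph_inst V E" and "(V, E) \<notin> clique_lang K" "0 < K" "S \<subseteq> V" "s \<in> S"
    and degree: "\<And>x. x \<in> S \<Longrightarrow> card {u\<in>S. E x u} = K - 1"
  obtains a b w where "a \<in> S" "b \<in> S" "E a b" "w \<in> closed_nbhd E S a" "w \<notin> closed_nbhd E S b"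
proof -
  have "\<exists>a\<in>S. \<exists>b\<in>S. E a b \<and> closed_nbhd E S a \<noteq> closed_nbhd E S b"
  proof (rule ccontr)
    assume "\<not> ?thesis"
    then have "closed_nbhd E S a = closed_nbhd E S b" if "a \<in> S" "b \<in> S" "E a b" for a b
      using that by blast
    then have clique: "\<forall>x\<in>closed_nbhd E S s. \<forall>y\<in>closed_nbhd E S s. x \<noteq> y \<longrightarrow> E x y"
      by (rule closed_nbhd_clique[OF \<open>s \<in> S\<close>])
    have "finite {u\<in>S. E s u}"
      using graph_inst_finite[OF graph] \<open>S \<subseteq> V\<close> by (auto intro: finite_subset)
    moreover have "s \<notin> {u\<in>S. E s u}"
      using graph_inst_irrefl[OF graph] by blast
    ultimately have "card (closed_nbhd E S s) = K"
      using degree[OF \<open>s \<in> S\<close>] \<open>0 < K\<close> by (simp add: closed_nbhd_def)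
    moreover have "closed_nbhd E S s \<subseteq> V"
      using \<open>S \<subseteq> V\<close> \<open>s \<in> S\<close> by (auto simp: closed_nbhd_def)
    ultimately have "(V, E) \<in> clique_lang K"
      unfolding clique_lang_def using clique by blast
    with assms(2) show False
      by contradiction
  qed
  then obtain a b where ab: "a \<in> S" "b \<in> S" "E a b" "closed_nbhd E S a \<noteq> closed_nbhd E S b"
    by blast
  show ?thesis
  proof (cases "closed_nbhd E S a \<subseteq> closed_nbhd E S b")
    case True
    then obtain w where "w \<in> closed_nbhd E S b" "w \<notin> closed_nbhd E S a"
      using ab(4) by blast
    with ab(1-3) graph_inst_sym[OF graph] show ?thesis
      using that[of b a w] by blast
  next
    case False
    then obtain w where "w \<in> closed_nbhd E S a" "w \<notin> closed_nbhd E S b"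
      by blast
    with ab(1-3) show ?thesis
      using that[of a b w] by blast
  qed
qed

lemma marked_coin_determined:
  assumes graph: "graph_inst V E" and "(V, E) \<notin> clique_lang K" and "0 < K"
    and "v0 \<in> V" "m1 v0 ! 0"
    and acc0: "all_accept (clique_decider K) V E \<rho>0 m1 (m2 \<rho>0)"
  obtains w where "w \<in> V"
    and "\<And>\<rho> \<sigma> j. all_accept (clique_decider K) V E \<rho> m1 (m2 \<rho>)
      \<Longrightarrow> all_accept (clique_decider K) V E \<sigma> m1 (m2 \<sigma>)
      \<Longrightarrow> (\<And>x. x \<noteq> w \<Longrightarrow> \<rho> x = \<sigma> x) \<Longrightarrow> j < 2 \<Longrightarrow> \<rho> w ! j = \<sigma> w ! j"
proof -
  define S where "S = {x\<in>V. m1 x ! 0}"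
  have "S \<subseteq> V"
    by (auto simp: S_def)
  have marked_nbrs: "{u. E x u \<and> m1 u ! 0} = {u\<in>S. E x u}" for x
    using graph_inst_edgeD[OF graph] by (auto simp: S_def)
  have "v0 \<in> S"
    using assms(4,5) by (simp add: S_def)
  moreover have "card {u\<in>S. E x u} = K - 1" if "x \<in> S" for x
    using accepted_marked_degree[OF graph acc0 _ \<open>0 < K\<close>, of x] that
    unfolding marked_nbrs by (simp add: S_def)
  ultimately obtain a b w where ab: "a \<in> S" "b \<in> S" "E a b"
    and w: "w \<in> closed_nbhd E S a" "w \<notin> closed_nbhd E S b"
    using edge_with_distinct_closed_nbhds[OF graph assms(2,3) \<open>S \<subseteq> V\<close>] by blast
  have finite_nbhd: "finite (closed_nbhd E S x)" for x
    using graph_inst_finite[OF graph] \<open>S \<subseteq> V\<close> by (auto simp: closed_nbhd_def intro: finite_subset)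
  have clique_parity: "m2 \<rho> x ! (4+j) = parity (\<lambda>y. \<rho> y ! j) (closed_nbhd E S x)"
    if acc: "all_accept (clique_decider K) V E \<rho> m1 (m2 \<rho>)" and "x \<in> S" "j < 2" for \<rho> x j
  proof -
    have x: "x \<in> V" "m1 x ! 0"
      using \<open>x \<in> S\<close> by (auto simp: S_def)
    have "parity (\<lambda>u. m2 \<rho> u ! j) {u\<in>S. E x u} = parity (\<lambda>u. \<rho> u ! j) {u\<in>S. E x u}"
      using accepted_echo[OF graph acc _ \<open>0 < K\<close> \<open>j < 2\<close>] \<open>S \<subseteq> V\<close> by (intro parity_cong) auto
    moreover have "x \<notin> {u\<in>S. E x u}" "finite {u\<in>S. E x u}"
      using graph_inst_irrefl[OF graph] finite_nbhd[of x] by (auto simp: closed_nbhd_def)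
    ultimately show ?thesis
      using accepted_marked_parity[OF graph acc x(1) \<open>0 < K\<close> x(2) \<open>j < 2\<close>]
      by (simp add: closed_nbhd_def parity_insert marked_nbrs)
  qed
  have "a \<in> V" "m1 a ! 0" "m1 b ! 0"
    using ab by (auto simp: S_def)
  show ?thesis
  proof (rule that)
    show "w \<in> V"
      using w(1) ab(1) \<open>S \<subseteq> V\<close> by (auto simp: closed_nbhd_def S_def)
  next
    fix \<rho> \<sigma> and j :: nat
    assume acc: "all_accept (clique_decider K) V E \<rho> m1 (m2 \<rho>)"
      "all_accept (clique_decider K) V E \<sigma> m1 (m2 \<sigma>)"
      and agree: "\<And>x. x \<noteq> w \<Longrightarrow> \<rho> x = \<sigma> x" and "j < 2"
    have same_parity: "parity (\<lambda>y. \<tau> y ! j) (closed_nbhd E S a) = parity (\<lambda>y. \<tau> y ! j) (closed_nbhd E S b)"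
      if "all_accept (clique_decider K) V E \<tau> m1 (m2 \<tau>)" for \<tau>
      using clique_parity[OF that ab(1) \<open>j < 2\<close>] clique_parity[OF that ab(2) \<open>j < 2\<close>]
        accepted_marked_agree[OF graph that \<open>a \<in> V\<close> \<open>0 < K\<close> \<open>m1 a ! 0\<close> ab(3) \<open>m1 b ! 0\<close> \<open>j < 2\<close>]
      by simp
    show "\<rho> w ! j = \<sigma> w ! j"
      using parity_determines_point[OF finite_nbhd w same_parity[OF acc(1)] same_parity[OF acc(2)]]
        agree by simp
  qed
qed

lemma clique_complete:
  assumes "graph_inst V E" "(V, E) \<in> clique_lang K"
  obtains m1 m2 where "\<forall>v. length (m1 v) \<le> 6" "\<forall>\<rho> v. length (m2 \<rho> v) \<le> 6"
    "acc_prob (clique_decider K) 2 V E m1 m2 = 1"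
proof -
  obtain S where "S \<subseteq> V" "card S = K" "\<forall>x\<in>S. \<forall>y\<in>S. x \<noteq> y \<longrightarrow> E x y"
    using assms(2) unfolding clique_lang_def by blast
  then have "acc_prob (clique_decider K) 2 V E (honest_msg1 E S) (honest_msg2 E S) = 1"
    using graph_inst_finite[OF assms(1)] honest_accepts[OF assms(1)] by (intro acc_prob_eq_1) auto
  then show ?thesis
    by (rule that[rotated 2]) (simp_all add: length_honest_msg1 length_honest_msg2)
qed

lemma accepted_coin_determined:
  assumes graph: "graph_inst V E" and "(V, E) \<notin> clique_lang K"
  obtains w where "w \<in> V"
    and "\<And>\<rho> \<sigma> j. all_accept (clique_decider K) V E \<rho> m1 (m2 \<rho>)
      \<Longrightarrow> all_accept (clique_decider K) V E \<sigma> m1 (m2 \<sigma>)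
      \<Longrightarrow> (\<And>x. x \<noteq> w \<Longrightarrow> \<rho> x = \<sigma> x) \<Longrightarrow> j < 2 \<Longrightarrow> \<rho> w ! j = \<sigma> w ! j"
proof (cases "\<exists>\<rho>0. all_accept (clique_decider K) V E \<rho>0 m1 (m2 \<rho>0)")
  case True
  then obtain \<rho>0 where acc0: "all_accept (clique_decider K) V E \<rho>0 m1 (m2 \<rho>0)"
    by blast
  have "0 < K"
    using assms(2) by (rule contrapos_np) (auto simp: clique_lang_def)
  show ?thesis
  proof (cases "\<exists>v\<in>V. m1 v ! 0")
    case True
    then obtain v0 where "v0 \<in> V" "m1 v0 ! 0"
      by blast
    then show ?thesis
      using marked_coin_determined[where ?m2.0 = m2, OF graph assms(2) \<open>0 < K\<close> _ _ acc0] that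
      by blast
  next
    case False
    then show ?thesis
      using unmarked_coin_determined[where ?m2.0 = m2, OF graph \<open>0 < K\<close> _ acc0] that by blast
  qed
next
  case False
  obtain w where "w \<in> V"
    using graph_inst_nonempty[OF graph] by blast
  with False show ?thesis
    by (intro that) auto
qed

lemma clique_sound:
  assumes graph: "graph_inst V E" and "(V, E) \<notin> clique_lang K"
  shows "acc_prob (clique_decider K) 2 V E m1 m2 \<le> 1 / 4"
proof -
  obtain w where "w \<in> V"
    and determined: "\<And>\<rho> \<sigma> j. all_accept (clique_decider K) V E \<rho> m1 (m2 \<rho>)
      \<Longrightarrow> all_accept (clique_decider K) V E \<sigma> m1 (m2 \<sigma>)
      \<Longrightarrow> (\<And>x. x \<noteq> w \<Longrightarrow> \<rho> x = \<sigma> x) \<Longrightarrow> j < 2 \<Longrightarrow> \<rho> w ! j = \<sigma> w ! j"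
    using accepted_coin_determined[OF assms] by blast
  have "acc_prob (clique_decider K) 2 V E m1 m2 \<le> 1 / 2 ^ 2"
  proof (rule acc_prob_le_coordinate_determined[OF graph_inst_finite[OF graph] \<open>w \<in> V\<close>])
    fix \<rho> \<sigma>
    assume "\<rho> \<in> coins V 2" "\<sigma> \<in> coins V 2"
      and acc: "all_accept (clique_decider K) V E \<rho> m1 (m2 \<rho>)"
        "all_accept (clique_decider K) V E \<sigma> m1 (m2 \<sigma>)"
      and agree: "\<And>x. x \<noteq> w \<Longrightarrow> \<rho> x = \<sigma> x"
    then have "length (\<rho> w) = 2" "length (\<sigma> w) = 2"
      using \<open>w \<in> V\<close> by (auto simp: coins_def)
    then show "\<rho> w = \<sigma> w"
      using determined[OF acc agree] by (auto intro: nth_equalityI)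
  qed
  then show ?thesis
    by simp
qed

theorem corollary1p6:
  shows "\<exists>c::nat. \<forall>K::nat. dMAM (\<lambda>_. c) (clique_lang K)"
proof (intro exI allI)
  fix K :: nat
  show "dMAM (\<lambda>_. 6) (clique_lang K)"
    unfolding dMAM_def
  proof (intro exI[of _ "\<lambda>_. 2"] exI[of _ "clique_decider K"] conjI allI impI)
    fix V E
    assume graph: "graph_inst V E"
    show "\<exists>m1 m2. (\<forall>v. length (m1 v) \<le> 6) \<and> (\<forall>\<rho> v. length (m2 \<rho> v) \<le> 6)
      \<and> acc_prob (clique_decider K) 2 V E m1 m2 > 2/3" if member: "(V, E) \<in> clique_lang K"
    proof -
      obtain m1 m2 where "\<forall>v. length (m1 v) \<le> 6" "\<forall>\<rho> v. length (m2 \<rho> v) \<le> 6"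
        "acc_prob (clique_decider K) 2 V E m1 m2 = 1"
        by (rule clique_complete[OF graph member])
      then show ?thesis
        by (intro exI[of _ m1] exI[of _ m2]) simp
    qed
    show "acc_prob (clique_decider K) 2 V E m1 m2 < 1/3" if "(V, E) \<notin> clique_lang K" for m1 m2
      using clique_sound[OF graph that, of m1 m2] by simp
  qed simp
qed

end
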